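(* Consider the anti-coordination game ($\mathcal V_a=\mathcal V$). (1) If $x^*$ is a Nash equilibrium and $z^*=z(x^* )$, then for every $\epsilon_a\in(\tfrac1n,\tfrac2n]$, $$G_a\!\left(\tfrac{n}{n-1}(z^*-\epsilon_a)\right)\ \ge\ z^*\ \ge\ G_a\!\left(\tfrac{n}{n-1}z^*\right).$$ (2) Conversely, if $z^*\in\{0,\tfrac1n,\dots,1\}$ satisfies these inequalities for every $\epsilon_a\in(\tfrac1n,\tfrac2n]$, then there exists a Nash equilibrium $x^*$ with $z(x^* )=z^*$.
   Context: Let $\mathcal V$ be a finite set of $n\ge2$ agents, all anti-coordinating. Given real weights $d_i$, the anti-coordination game has action set $\{-1,+1\}$, configuration space $\mathcal X=\{-1,+1\}^{\mathcal V}$ and utilities $u_i(x)=-\big(\sum_{j\neq i}x_ix_j-d_ix_i\big)$. A (pure) Nash equilibrium is an $x\in\mathcal X$ with $u_i(x)\ge u_i(y_i,x_{-i})$ for all $i$ and $y_i\in\{-1,+1\}$. Thresholds: $r_i=\tfrac12+\tfrac{d_i}{2(n-1)}$. For $x\in\mathcal X$, $z(x)=\frac1n|\{i: x_i=+1\}|$. The threshold complementary CDF is $G_a(t)=\frac1n|\{i\in\mathcal V: r_i> t\}|$, $t\in\mathbb R$. *)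

theory Defs
  imports "HOL-Analysis.Analysis" "HOL-Library.FuncSet"
begin

definition configs :: "'a set \<Rightarrow> ('a \<Rightarrow> real) set" where
  "configs V = V \<rightarrow>\<^sub>E {-1, 1}"

definition util_a :: "'a set \<Rightarrow> ('a \<Rightarrow> real) \<Rightarrow> 'a \<Rightarrow> ('a \<Rightarrow> real) \<Rightarrow> real" where
  "util_a V d i x = - ((\<Sum>j\<in>V - {i}. x i * x j) - d i * x i)"

definition nash_a :: "'a set \<Rightarrow> ('a \<Rightarrow> real) \<Rightarrow> ('a \<Rightarrow> real) \<Rightarrow> bool" where
  "nash_a V d x \<longleftrightarrow> x \<in> configs V \<and>
     (\<forall>i\<in>V. \<forall>y\<in>{-1, 1::real}. util_a V d i x \<ge> util_a V d i (x(i := y)))"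

definition thr :: "'a set \<Rightarrow> ('a \<Rightarrow> real) \<Rightarrow> 'a \<Rightarrow> real" where
  "thr V d i = 1/2 + d i / (2 * (real (card V) - 1))"

definition zfrac :: "'a set \<Rightarrow> ('a \<Rightarrow> real) \<Rightarrow> real" where
  "zfrac V x = real (card {i\<in>V. x i = 1}) / real (card V)"

definition Ga :: "'a set \<Rightarrow> ('a \<Rightarrow> real) \<Rightarrow> real \<Rightarrow> real" where
  "Ga V d t = real (card {i\<in>V. thr V d i > t}) / real (card V)"

end

theory Submission imports Defs begin

text \<open>With m agents playing +1, agent i's best response depends only on how its threshold
  compares with m/(n-1): agents playing +1 are stable iff r i \<ge> (m-1)/(n-1), agents
  playing -1 iff r i \<le> m/(n-1). Counting the agents on either side of these cut points
  gives the inequalities for G_a; the shift by \<epsilon> turns the non-strict cut (m-1)/(n-1) into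
  the strict comparison used by G_a. Conversely, the inequalities give
  |{r i > k/(n-1)}| \<le> k \<le> |{r i \<ge> (k-1)/(n-1)}|, and any k agents chosen between these two
  sets form an equilibrium.\<close>

lemma sum_configs:
  assumes "finite V" "x \<in> configs V"
  shows "(\<Sum>j\<in>V. x j) = 2 * real (card {i\<in>V. x i = 1}) - real (card V)"
proof -
  let ?P = "{i\<in>V. x i = 1}"
  have minus: "\<And>j. j \<in> V - ?P \<Longrightarrow> x j = -1" using assms(2) unfolding configs_def by auto
  have "(\<Sum>j\<in>V. x j) = (\<Sum>j\<in>?P. x j) + (\<Sum>j\<in>V - ?P. x j)"
    using assms(1) by (metis (no_types, lifting) sum.subset_diff add.commute mem_Collect_eq subsetI)
  also have "\<dots> = real (card ?P) - real (card (V - ?P))"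
    using sum.cong[OF refl minus, of "V - ?P"] by simp
  also have "real (card (V - ?P)) = real (card V) - real (card ?P)"
    using assms(1) by (simp add: card_Diff_subset card_mono of_nat_diff)
  finally show ?thesis by simp
qed

lemma util_a_fun_upd:
  assumes "finite V" "i \<in> V"
  shows "util_a V d i (x(i := y)) = - (y * ((\<Sum>j\<in>V. x j) - x i - d i))"
  using assms by (simp add: util_a_def sum_distrib_left[symmetric] sum_diff1 algebra_simps)

lemma thr_ge_iff:
  assumes "card V \<ge> 2"
  shows "c / (real (card V) - 1) \<le> thr V d i \<longleftrightarrow> 2 * c - (real (card V) - 1) \<le> d i"
proof -
  have "c / k \<le> 1/2 + D / (2 * k) \<longleftrightarrow> 2 * c - k \<le> D" if "k > 0" for k D :: real
    using that by (simp add: field_simps)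
  from this[of "real (card V) - 1" "d i"] show ?thesis using assms unfolding thr_def by simp
qed

lemma thr_le_iff:
  assumes "card V \<ge> 2"
  shows "thr V d i \<le> c / (real (card V) - 1) \<longleftrightarrow> d i \<le> 2 * c - (real (card V) - 1)"
proof -
  have "1/2 + D / (2 * k) \<le> c / k \<longleftrightarrow> D \<le> 2 * c - k" if "k > 0" for k D :: real
    using that mult_le_cancel_right_pos[of k "D + k" "2 * c"] by (simp add: field_simps)
  from this[of "real (card V) - 1" "d i"] show ?thesis using assms unfolding thr_def by simp
qed

lemma nash_a_iff_thr:
  assumes "finite V" "card V \<ge> 2" "x \<in> configs V"
  defines "m \<equiv> real (card {i\<in>V. x i = 1})" and "n \<equiv> real (card V)"
  shows "nash_a V d x \<longleftrightarrow>
    (\<forall>i\<in>V. (x i = 1 \<longrightarrow> (m - 1) / (n - 1) \<le> thr V d i) \<and>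
           (x i \<noteq> 1 \<longrightarrow> thr V d i \<le> m / (n - 1)))"
proof -
  have S: "(\<Sum>j\<in>V. x j) = 2 * m - n" using sum_configs[OF assms(1,3)] by (simp add: m_def n_def)
  have stable_iff: "(\<forall>y\<in>{-1, 1::real}. util_a V d i (x(i := y)) \<le> util_a V d i x) \<longleftrightarrow>
      (x i = 1 \<longrightarrow> (m - 1) / (n - 1) \<le> thr V d i) \<and> (x i \<noteq> 1 \<longrightarrow> thr V d i \<le> m / (n - 1))"
    if i: "i \<in> V" for i
  proof -
    have "x i = 1 \<or> x i = -1" using assms(3) i unfolding configs_def by auto
    moreover have "util_a V d i x = - (x i * ((\<Sum>j\<in>V. x j) - x i - d i))"
      using util_a_fun_upd[OF assms(1) i, of d x "x i"] by simp
    ultimately show ?thesis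
      using util_a_fun_upd[OF assms(1) i] thr_ge_iff[OF assms(2)] thr_le_iff[OF assms(2)]
      by (auto simp: S n_def)
  qed
  show ?thesis unfolding nash_a_def using stable_iff assms(3) by auto
qed

lemma Ga_le_iff:
  assumes "V \<noteq> {}" "finite V"
  shows "Ga V d t \<le> real k / real (card V) \<longleftrightarrow> card {i\<in>V. t < thr V d i} \<le> k"
  using assms by (simp add: Ga_def divide_le_cancel card_gt_0_iff)

lemma Ga_ge_iff:
  assumes "V \<noteq> {}" "finite V"
  shows "real k / real (card V) \<le> Ga V d t \<longleftrightarrow> k \<le> card {i\<in>V. t < thr V d i}"
  using assms by (simp add: Ga_def divide_le_cancel card_gt_0_iff)

lemma nash_a_Ga_upper:
  assumes "finite V" "card V \<ge> 2" "nash_a V d x"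
  defines "n \<equiv> real (card V)"
  shows "Ga V d (n / (n - 1) * zfrac V x) \<le> zfrac V x"
proof -
  define P where "P = {i\<in>V. x i = 1}"
  have V: "V \<noteq> {}" using assms(2) by auto
  have x: "x \<in> configs V" using assms(3) unfolding nash_a_def by blast
  have arg: "n / (n - 1) * zfrac V x = real (card P) / (n - 1)"
    using V assms(1) by (simp add: zfrac_def n_def P_def)
  have "{i\<in>V. real (card P) / (n - 1) < thr V d i} \<subseteq> P"
    using assms(3) nash_a_iff_thr[OF assms(1,2) x] by (force simp: P_def n_def)
  then have "card {i\<in>V. real (card P) / (n - 1) < thr V d i} \<le> card P"
    using assms(1) by (simp add: card_mono P_def)
  then show ?thesis unfolding arg using Ga_le_iff[OF V assms(1)] by (simp add: zfrac_def P_def)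
qed

lemma nash_a_Ga_lower:
  assumes "finite V" "card V \<ge> 2" "nash_a V d x"
  defines "n \<equiv> real (card V)"
  assumes "1 / n < \<epsilon>"
  shows "zfrac V x \<le> Ga V d (n / (n - 1) * (zfrac V x - \<epsilon>))"
proof -
  define P where "P = {i\<in>V. x i = 1}"
  have V: "V \<noteq> {}" and n1: "n > 1" using assms(2) by (auto simp: n_def)
  have x: "x \<in> configs V" using assms(3) unfolding nash_a_def by blast
  have arg: "n / (n - 1) * (zfrac V x - \<epsilon>) = (real (card P) - n * \<epsilon>) / (n - 1)"
    using n1 by (simp add: zfrac_def n_def[symmetric] P_def field_simps)
  have "n * \<epsilon> > 1" using assms(5) n1 by (simp add: field_simps)
  then have "(real (card P) - n * \<epsilon>) / (n - 1) < (real (card P) - 1) / (n - 1)"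
    using n1 by (simp add: divide_strict_right_mono)
  then have "P \<subseteq> {i\<in>V. (real (card P) - n * \<epsilon>) / (n - 1) < thr V d i}"
    using assms(3) nash_a_iff_thr[OF assms(1,2) x] by (force simp: P_def n_def)
  then have "card P \<le> card {i\<in>V. (real (card P) - n * \<epsilon>) / (n - 1) < thr V d i}"
    using assms(1) by (simp add: card_mono)
  then show ?thesis unfolding arg using Ga_ge_iff[OF V assms(1)] by (simp add: zfrac_def P_def)
qed

lemma exists_subset_between_card:
  assumes "A \<subseteq> B" "finite B" "card A \<le> k" "k \<le> card B"
  obtains P where "A \<subseteq> P" "P \<subseteq> B" "card P = k"
proof -
  have "k - card A \<le> card (B - A)"
    using assms by (simp add: card_Diff_subset finite_subset)
  then obtain Q where Q: "Q \<subseteq> B - A" "card Q = k - card A" "finite Q"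
    by (rule obtain_subset_with_card_n)
  have "card (A \<union> Q) = k"
    using Q assms by (subst card_Un_disjoint) (auto intro: finite_subset)
  then show ?thesis using that[of "A \<union> Q"] Q assms(1) by blast
qed

lemma nash_a_exists_card:
  assumes "finite V" "card V \<ge> 2"
  defines "n \<equiv> real (card V)"
  assumes "card {i\<in>V. real k / (n - 1) < thr V d i} \<le> k"
    and "k \<le> card {i\<in>V. (real k - 1) / (n - 1) \<le> thr V d i}"
  obtains x where "nash_a V d x" "card {i\<in>V. x i = 1} = k"
proof -
  have n1: "n > 1" using assms(2) by (simp add: n_def)
  have sub: "{i\<in>V. real k / (n - 1) < thr V d i} \<subseteq> {i\<in>V. (real k - 1) / (n - 1) \<le> thr V d i}"
    using n1 divide_right_mono[of "real k - 1" "real k" "n - 1"] by auto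
  have fin: "finite {i\<in>V. (real k - 1) / (n - 1) \<le> thr V d i}" using assms(1) by simp
  obtain P where P: "{i\<in>V. real k / (n - 1) < thr V d i} \<subseteq> P"
    "P \<subseteq> {i\<in>V. (real k - 1) / (n - 1) \<le> thr V d i}" "card P = k"
    using exists_subset_between_card[OF sub fin assms(4,5)] by blast
  define x where "x = restrict (\<lambda>i. if i \<in> P then 1 else -1 :: real) V"
  have x: "x \<in> configs V" unfolding configs_def x_def by auto
  have ones: "{i\<in>V. x i = 1} = P" using P(2) unfolding x_def by auto
  have "nash_a V d x"
    unfolding nash_a_iff_thr[OF assms(1,2) x] ones P(3) n_def[symmetric]
    using P(1,2) by (force simp: x_def)
  then show ?thesis using that ones P(3) by blast
qed

text \<open>The finitely many thresholds leave a gap just below any a; shifting by \<epsilon> lands in it.\<close>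

lemma exists_gap_below:
  fixes S :: "real set"
  assumes "finite S" "c < a"
  obtains t where "c \<le> t" "t < a" "\<forall>s\<in>S. s < a \<longrightarrow> s < t"
proof (cases "{s\<in>S. s < a} = {}")
  case True
  then show ?thesis using that[of c] assms(2) by auto
next
  case False
  define M where "M = Max {s\<in>S. s < a}"
  have "M < a" "\<forall>s\<in>S. s < a \<longrightarrow> s \<le> M"
    using False assms(1) Max_in[of "{s\<in>S. s < a}"] by (auto simp: M_def)
  show ?thesis
  proof (rule that[of "max c ((M + a) / 2)"])
    show "\<forall>s\<in>S. s < a \<longrightarrow> s < max c ((M + a) / 2)"
      using \<open>M < a\<close> \<open>\<forall>s\<in>S. s < a \<longrightarrow> s \<le> M\<close> by (auto simp: less_max_iff_disj)
  qed (use \<open>M < a\<close> assms(2) in auto)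
qed

lemma nash_a_exists_of_Ga:
  assumes "finite V" "card V \<ge> 2"
  defines "n \<equiv> real (card V)"
  assumes "k \<le> card V"
    and lower: "\<And>\<epsilon>. 1 / n < \<epsilon> \<Longrightarrow> \<epsilon> \<le> 2 / n \<Longrightarrow> real k / n \<le> Ga V d (n / (n - 1) * (real k / n - \<epsilon>))"
    and upper: "Ga V d (n / (n - 1) * (real k / n)) \<le> real k / n"
  obtains x where "nash_a V d x" "zfrac V x = real k / n"
proof -
  have V: "V \<noteq> {}" and n1: "n > 1" using assms(2) by (auto simp: n_def)
  define a where "a = (real k - 1) / (n - 1)"
  have "(real k - 2) / (n - 1) < a" unfolding a_def using n1 by (simp add: divide_strict_right_mono)
  then obtain t where t: "(real k - 2) / (n - 1) \<le> t" "t < a"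
    and gap: "\<forall>s\<in>thr V d ` V. s < a \<longrightarrow> s < t"
    using exists_gap_below[of "thr V d ` V"] assms(1) by blast
  define \<epsilon> where "\<epsilon> = (real k - t * (n - 1)) / n"
  have "t * (n - 1) < real k - 1" "real k - 2 \<le> t * (n - 1)"
    using t n1 by (simp_all add: a_def pos_less_divide_eq pos_divide_le_eq)
  then have "1 / n < \<epsilon>" "\<epsilon> \<le> 2 / n"
    unfolding \<epsilon>_def using n1 by (simp_all add: divide_strict_right_mono divide_right_mono)
  moreover have "n / (n - 1) * (real k / n - \<epsilon>) = t"
    using n1 by (simp add: \<epsilon>_def field_simps)
  ultimately have "k \<le> card {i\<in>V. t < thr V d i}"
    using lower[of \<epsilon>] Ga_ge_iff[OF V assms(1)] by (simp add: n_def)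
  also have "\<dots> \<le> card {i\<in>V. a \<le> thr V d i}"
    using assms(1) gap by (intro card_mono) (auto simp: not_le[symmetric])
  finally have "k \<le> card {i\<in>V. (real k - 1) / (n - 1) \<le> thr V d i}" by (simp add: a_def)
  moreover have "card {i\<in>V. real k / (n - 1) < thr V d i} \<le> k"
    using upper Ga_le_iff[OF V assms(1)] n1 by (simp add: n_def)
  ultimately obtain x where "nash_a V d x" "card {i\<in>V. x i = 1} = k"
    using nash_a_exists_card[OF assms(1,2)] unfolding n_def by blast
  then show ?thesis using that by (simp add: zfrac_def n_def)
qed

theorem corollary2:
  fixes V :: "'a set" and d :: "'a \<Rightarrow> real"
  assumes "finite V" and "card V \<ge> 2"
  defines "n \<equiv> real (card V)"
  shows "(\<forall>x. nash_a V d x \<longrightarrow>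
            (\<forall>\<epsilon>. 1/n < \<epsilon> \<and> \<epsilon> \<le> 2/n \<longrightarrow>
               Ga V d (n/(n-1) * (zfrac V x - \<epsilon>)) \<ge> zfrac V x \<and>
               zfrac V x \<ge> Ga V d (n/(n-1) * zfrac V x)))
       \<and> (\<forall>z. (\<exists>k::nat. k \<le> card V \<and> z = real k / n) \<longrightarrow>
            (\<forall>\<epsilon>. 1/n < \<epsilon> \<and> \<epsilon> \<le> 2/n \<longrightarrow>
               Ga V d (n/(n-1) * (z - \<epsilon>)) \<ge> z \<and> z \<ge> Ga V d (n/(n-1) * z)) \<longrightarrow>
            (\<exists>x. nash_a V d x \<and> zfrac V x = z))"
proof (intro conjI allI impI)
  fix x \<epsilon> assume "nash_a V d x" and "1/n < \<epsilon> \<and> \<epsilon> \<le> 2/n"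
  then show "Ga V d (n/(n-1) * (zfrac V x - \<epsilon>)) \<ge> zfrac V x"
    and "zfrac V x \<ge> Ga V d (n/(n-1) * zfrac V x)"
    using nash_a_Ga_lower[OF assms(1,2)] nash_a_Ga_upper[OF assms(1,2)] by (auto simp: n_def)
next
  fix z assume "\<exists>k::nat. k \<le> card V \<and> z = real k / n"
  then obtain k where k: "k \<le> card V" "z = real k / n" by blast
  assume "\<forall>\<epsilon>. 1/n < \<epsilon> \<and> \<epsilon> \<le> 2/n \<longrightarrow>
            Ga V d (n/(n-1) * (z - \<epsilon>)) \<ge> z \<and> z \<ge> Ga V d (n/(n-1) * z)"
  moreover have "1/n < 2/n" using assms(2) by (simp add: n_def divide_strict_right_mono)
  ultimately obtain x where "nash_a V d x" "zfrac V x = z"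
    using nash_a_exists_of_Ga[OF assms(1,2) k(1), of d] unfolding k(2) n_def by blast
  then show "\<exists>x. nash_a V d x \<and> zfrac V x = z" by blast
qed

end
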